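(* Suppose $(X,y)$ is orthogonal separable and $\lambda\in\mathbb R^N$ satisfies $\mathrm{diag}(y)\lambda\ge0$. Let $\hat D_0$ be an $N\times N$ diagonal $0/1$ matrix with $u_0=X^T\hat D_0\lambda$ and $\|u_0\|_2\le1$. Then for every diagonal $0/1$ matrix $D_j$ with $\hat D_0-D_j\ge0$ we have $\|X^TD_j\lambda\|_2\le\|u_0\|_2\le1$; consequently, if $D_j\in\mathcal P$, then $\max_{\|u\|_2\le1,\ (2D_j-I)Xu\ge0}\lambda^TD_jXu\le1$.
   Context: $X\in\mathbb R^{N\times d}$ rows $x_n$, $y\in\{\pm1\}^N$. Orthogonal separable: $x_n^Tx_{n'}>0$ if $y_n=y_{n'}$ and $x_n^Tx_{n'}\le0$ if $y_n\ne y_{n'}$. $\mathcal P=\{\mathrm{diag}(\mathbb I(Xw\ge0)):w\in\mathbb R^d\}$. Inequalities between vectors/diagonal matrices are entrywise. *)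

theory Defs
  imports "HOL-Analysis.Analysis"
begin

definition diag_mat :: "real^'n \<Rightarrow> real^'n^'n" where
  "diag_mat v = (\<chi> i j. if i = j then v $ i else 0)"

definition is_diag01 :: "real^'n^'n \<Rightarrow> bool" where
  "is_diag01 D \<longleftrightarrow> (\<forall>i j. i \<noteq> j \<longrightarrow> D $ i $ j = 0) \<and> (\<forall>i. D $ i $ i = 0 \<or> D $ i $ i = 1)"

definition orth_separable :: "real^'d^'n \<Rightarrow> real^'n \<Rightarrow> bool" where
  "orth_separable X y \<longleftrightarrow>
     (\<forall>n n'. (y $ n = y $ n' \<longrightarrow> (X $ n) \<bullet> (X $ n') > 0) \<and>
             (y $ n \<noteq> y $ n' \<longrightarrow> (X $ n) \<bullet> (X $ n') \<le> 0))"

definition act_patterns :: "real^'d^'n \<Rightarrow> (real^'n^'n) set" where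
  "act_patterns X = {diag_mat (\<chi> i. if (X *v w) $ i \<ge> 0 then 1 else 0) | w. True}"

end

theory Submission
  imports Defs
begin

text \<open>With \<open>z\<^sub>i = \<lambda>\<^sub>i x\<^sub>i\<close>, orthogonal separability and \<open>diag(y)\<lambda> \<ge> 0\<close> make all inner products
  \<open>z\<^sub>i \<bullet> z\<^sub>k\<close> nonnegative. Then \<open>X\<^sup>T D\<lambda> = \<Sum> D\<^sub>i\<^sub>i z\<^sub>i\<close>, and lowering the 0/1 weights from
  \<open>D\<^sub>0\<close> to \<open>D\<^sub>j\<close> removes a sum \<open>w\<close> with \<open>v \<bullet> w \<ge> 0\<close>, so \<open>\<parallel>v\<parallel>\<^sup>2 \<le> \<parallel>v + w\<parallel>\<^sup>2\<close>. The last claim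
  is Cauchy-Schwarz: \<open>\<lambda>\<^sup>T D\<^sub>j X u = (X\<^sup>T D\<^sub>j \<lambda>) \<bullet> u\<close>.\<close>

lemma norm_sum_mono_pairwise_inner_nonneg:
  fixes z :: "'i \<Rightarrow> 'a::real_inner" and c d :: "'i \<Rightarrow> real"
  assumes "finite I"
    and inner_nonneg: "\<And>i k. i \<in> I \<Longrightarrow> k \<in> I \<Longrightarrow> z i \<bullet> z k \<ge> 0"
    and c_nonneg: "\<And>i. i \<in> I \<Longrightarrow> 0 \<le> c i"
    and c_le_d: "\<And>i. i \<in> I \<Longrightarrow> c i \<le> d i"
  shows "norm (\<Sum>i\<in>I. c i *\<^sub>R z i) \<le> norm (\<Sum>i\<in>I. d i *\<^sub>R z i)"
proof -
  define v where "v = (\<Sum>i\<in>I. c i *\<^sub>R z i)"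
  define w where "w = (\<Sum>i\<in>I. (d i - c i) *\<^sub>R z i)"
  have sum_eq: "(\<Sum>i\<in>I. d i *\<^sub>R z i) = v + w"
    unfolding v_def w_def by (simp add: sum.distrib[symmetric] scaleR_add_left[symmetric])
  have "v \<bullet> w = (\<Sum>k\<in>I. \<Sum>i\<in>I. (c i * (d k - c k)) * (z i \<bullet> z k))"
    unfolding v_def w_def inner_sum_left inner_sum_right by (simp add: algebra_simps)
  also have "\<dots> \<ge> 0"
    using c_nonneg c_le_d inner_nonneg by (intro sum_nonneg mult_nonneg_nonneg) auto
  finally have "v \<bullet> w \<ge> 0" .
  then have "(norm v)\<^sup>2 \<le> (norm (v + w))\<^sup>2"
    by (simp add: power2_norm_eq_inner inner_add_left inner_add_right inner_commute)
  then show ?thesis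
    unfolding sum_eq v_def[symmetric] by (simp add: power2_le_iff_abs_le)
qed

lemma orth_separable_inner_scaled_rows_nonneg:
  assumes y_pm: "\<forall>i. y $ i = 1 \<or> y $ i = -1"
    and sep: "orth_separable X y"
    and sign: "\<And>i. y $ i * lam $ i \<ge> 0"
  shows "(lam $ i *\<^sub>R X $ i) \<bullet> (lam $ k *\<^sub>R X $ k) \<ge> 0"
proof (cases "y $ i = y $ k")
  case True
  then have "lam $ i * lam $ k = (y $ i * lam $ i) * (y $ k * lam $ k)"
    using y_pm by (metis mult_1 mult_minus_left minus_mult_minus)
  then have "lam $ i * lam $ k \<ge> 0" using sign by (metis mult_nonneg_nonneg)
  moreover have "X $ i \<bullet> X $ k > 0" using sep True unfolding orth_separable_def by blast
  ultimately have "(lam $ i * lam $ k) * (X $ i \<bullet> X $ k) \<ge> 0" by simp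
  then show ?thesis by (simp add: ac_simps)
next
  case False
  then have "lam $ i * lam $ k = - ((y $ i * lam $ i) * (y $ k * lam $ k))"
    using y_pm by (metis mult_1 mult_minus_left minus_mult_minus)
  then have "lam $ i * lam $ k \<le> 0" using sign by (simp add: mult_nonneg_nonneg)
  moreover have "X $ i \<bullet> X $ k \<le> 0" using sep False unfolding orth_separable_def by blast
  ultimately have "(lam $ i * lam $ k) * (X $ i \<bullet> X $ k) \<ge> 0" by (rule mult_nonpos_nonpos)
  then show ?thesis by (simp add: ac_simps)
qed

lemma transpose_mult_vector_eq_sum_rows:
  fixes X :: "real^'d^'n"
  shows "transpose X *v z = (\<Sum>i\<in>UNIV. z $ i *\<^sub>R X $ i)"
  by (simp add: vec_eq_iff matrix_vector_mult_def transpose_def sum_component mult.commute)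

lemma is_diag01_mult_vector_nth:
  fixes D :: "real^'n^'n"
  assumes "is_diag01 D"
  shows "(D *v v) $ i = D $ i $ i * v $ i"
  using assms unfolding is_diag01_def matrix_vector_mult_def
  by (subst sum.remove[of _ i]) (auto intro!: sum.neutral)

lemma is_diag01_transpose:
  assumes "is_diag01 D"
  shows "transpose D = D"
  using assms unfolding is_diag01_def by (simp add: vec_eq_iff transpose_def) metis

lemma diag_mat_mult_vector_nth: "(diag_mat y *v v) $ i = y $ i * v $ i"
  unfolding diag_mat_def matrix_vector_mult_def
  by (subst sum.remove[of _ i]) (auto intro!: sum.neutral)

lemma inner_mult_vector_eq_transpose_inner:
  fixes X :: "real^'d^'n" and D :: "real^'n^'n"
  shows "lam \<bullet> (D *v (X *v u)) = (transpose X *v (transpose D *v lam)) \<bullet> u"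
  by (simp flip: dot_lmul_matrix)

theorem lemma6:
  fixes X :: "real^'d^'n" and y :: "real^'n" and lam :: "real^'n"
    and D0 Dj :: "real^'n^'n" and u0 :: "real^'d"
  assumes y_pm: "\<forall>i. y $ i = 1 \<or> y $ i = -1"
    and sep: "orth_separable X y"
    and lam_sign: "\<forall>i. (diag_mat y *v lam) $ i \<ge> 0"
    and D0: "is_diag01 D0"
    and u0_def: "u0 = transpose X *v (D0 *v lam)"
    and u0_le: "norm u0 \<le> 1"
    and Dj: "is_diag01 Dj"
    and D0_ge: "\<forall>i j. (D0 - Dj) $ i $ j \<ge> 0"
  shows "norm (transpose X *v (Dj *v lam)) \<le> norm u0 \<and> norm u0 \<le> 1 \<and>
         (Dj \<in> act_patterns X \<longrightarrow>
            (\<forall>u :: real^'d. norm u \<le> 1 \<and>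
                 (\<forall>i. (((2 :: real) *\<^sub>R Dj - mat 1) *v (X *v u)) $ i \<ge> 0) \<longrightarrow>
               lam \<bullet> (Dj *v (X *v u)) \<le> 1))"
proof -
  define v where "v = transpose X *v (Dj *v lam)"
  have rows_expand: "transpose X *v (D *v lam) = (\<Sum>i\<in>UNIV. D $ i $ i *\<^sub>R (lam $ i *\<^sub>R X $ i))"
    if "is_diag01 D" for D
    unfolding transpose_mult_vector_eq_sum_rows by (simp add: is_diag01_mult_vector_nth[OF that])
  have "norm v \<le> norm u0"
    unfolding v_def u0_def rows_expand[OF Dj] rows_expand[OF D0]
  proof (rule norm_sum_mono_pairwise_inner_nonneg)
    show "(lam $ i *\<^sub>R X $ i) \<bullet> (lam $ k *\<^sub>R X $ k) \<ge> 0" for i k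
      using orth_separable_inner_scaled_rows_nonneg[OF y_pm sep] lam_sign
      by (simp add: diag_mat_mult_vector_nth)
    show "0 \<le> Dj $ i $ i" for i using Dj unfolding is_diag01_def by (metis order_refl zero_le_one)
    show "Dj $ i $ i \<le> D0 $ i $ i" for i using D0_ge by simp
  qed simp
  moreover have "lam \<bullet> (Dj *v (X *v u)) \<le> 1" if "norm u \<le> 1" for u
  proof -
    have "lam \<bullet> (Dj *v (X *v u)) = v \<bullet> u"
      unfolding v_def inner_mult_vector_eq_transpose_inner is_diag01_transpose[OF Dj] ..
    also have "\<dots> \<le> norm v * norm u" by (rule norm_cauchy_schwarz)
    also have "\<dots> \<le> 1 * 1" using \<open>norm v \<le> norm u0\<close> u0_le that by (intro mult_mono) auto
    finally show ?thesis by simp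
  qed
  ultimately show ?thesis using u0_le unfolding v_def by auto
qed

end
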